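(* Let $\gamma\in[0,1]$ and $V_p^->0$ be constants, and let $V_p>0$, $c>0$. Define $$p(v,V_p,c)=(1-\gamma)\Big(\frac{V_p}{V_p^-}\Big)^2v+\gamma v^3-(v+c)^3,$$ and suppose that $p(\cdot,V_p,c)$ has two positive zeros $0<v_1<v_2$. Consider the autonomous system $$\dot v=(1-\gamma)\Big(\frac{V_p}{V_p^-}\Big)^2m^3-(1-\gamma m^3)v^2,\qquad \dot m=(1-m)v-cm .$$ If $a=(a_1,a_2)$ and $b=(b_1,b_2)$ satisfy $$v_1<a_1<v_2,\qquad \sqrt[3]{\frac{a_1^2}{(1-\gamma)(V_p/V_p^-)^2+\gamma a_1^2}}<a_2<\frac{a_1}{a_1+c},$$ and $$v_2<b_1,\qquad \frac{b_1}{b_1+c}<b_2<\sqrt[3]{\frac{b_1^2}{(1-\gamma)(V_p/V_p^-)^2+\gamma b_1^2}},$$ then the box $K_{a,b}=[a_1,b_1]\times[a_2,b_2]$ is forward invariant under the flow of this system.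
   Context: The positive equilibria of the system are the points $(v,m)$ with $v>0$, $p(v,V_p,c)=0$ and $m=v/(v+c)$. Here $v$ is the dimensionless wind speed, $m$ the moisture, $V_p$ the maximum potential velocity (with $V_p^-$ a fixed reference value), $c$ the dimensionless wind shear. *)

theory Defs
  imports "HOL-Analysis.Analysis"
begin

text \<open>The cubic p(v, V_p, c); Vpm stands for the fixed reference value V_p^-.\<close>
definition pcub :: "real \<Rightarrow> real \<Rightarrow> real \<Rightarrow> real \<Rightarrow> real \<Rightarrow> real" where
  "pcub \<gamma> Vpm v Vp c = (1 - \<gamma>) * (Vp / Vpm)^2 * v + \<gamma> * v^3 - (v + c)^3"

definition vfield :: "real \<Rightarrow> real \<Rightarrow> real \<Rightarrow> real \<Rightarrow> real \<times> real \<Rightarrow> real \<times> real" where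
  "vfield \<gamma> Vpm Vp c = (\<lambda>(v, m).
     ((1 - \<gamma>) * (Vp / Vpm)^2 * m^3 - (1 - \<gamma> * m^3) * v^2,
      (1 - m) * v - c * m))"

text \<open>Since the system is autonomous, the initial time is taken to be 0.\<close>
definition forward_invariant :: "(real \<times> real \<Rightarrow> real \<times> real) \<Rightarrow> (real \<times> real) set \<Rightarrow> bool" where
  "forward_invariant F K \<longleftrightarrow>
     (\<forall>(x :: real \<Rightarrow> real \<times> real) T. 0 \<le> T \<longrightarrow>
        (\<forall>t\<in>{0..T}. (x has_vector_derivative F (x t)) (at t within {0..T})) \<longrightarrow>
        x 0 \<in> K \<longrightarrow> (\<forall>t\<in>{0..T}. x t \<in> K))"

end

theory Submission
  imports Defs
begin

text \<open>On the faces v = a1 and v = b1 the box lies on opposite sides of the v-nullcline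
  m = root 3 (v^2 / ((1 - \<gamma>) (V_p/V_p^-)^2 + \<gamma> v^2)), and on the faces m = a2 and
  m = b2 on opposite sides of the m-nullcline m = v/(v + c); hence the vector field points
  strictly into the box along its whole boundary. A solution leaving the box would have a
  first exit time, at which it lies on the boundary; there the inward derivative keeps it
  inside for a short while, contradicting the choice of the exit time.\<close>

lemma has_real_derivative_fst:
  assumes "(x has_vector_derivative D) F"
  shows "((\<lambda>t. fst (x t)) has_real_derivative fst D) F"
  using has_derivative_fst[OF assms[unfolded has_vector_derivative_def]]
  by (simp add: has_field_derivative_def mult_commute_abs)

lemma has_real_derivative_snd:
  assumes "(x has_vector_derivative D) F"
  shows "((\<lambda>t. snd (x t)) has_real_derivative snd D) F"
  using has_derivative_snd[OF assms[unfolded has_vector_derivative_def]]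
  by (simp add: has_field_derivative_def mult_commute_abs)

lemma has_real_derivative_right_above:
  fixes g :: "real \<Rightarrow> real"
  assumes der: "(g has_real_derivative l) (at s within S)"
    and "lo \<le> g s" and inward: "g s = lo \<Longrightarrow> 0 < l"
  shows "\<exists>d>0. \<forall>h. 0 < h \<longrightarrow> h < d \<longrightarrow> s + h \<in> S \<longrightarrow> lo < g (s + h)"
proof (cases "g s = lo")
  case True
  then show ?thesis
    using has_real_derivative_pos_inc_right[OF der inward[OF True]] by metis
next
  case False
  with \<open>lo \<le> g s\<close> have "lo < g s" by simp
  moreover have "(g \<longlongrightarrow> g s) (at s within S)"
    using DERIV_continuous[OF der] by (simp add: continuous_within)
  ultimately have "\<forall>\<^sub>F t in at s within S. lo < g t"
    using order_tendstoD(1) by blast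
  then obtain d where "d > 0" and d: "\<And>t. t \<in> S \<Longrightarrow> t \<noteq> s \<Longrightarrow> dist t s < d \<Longrightarrow> lo < g t"
    unfolding eventually_at by blast
  then show ?thesis
    by (intro exI[of _ d]) (auto intro!: d simp: dist_real_def)
qed

lemma has_real_derivative_right_in_interval:
  fixes g :: "real \<Rightarrow> real"
  assumes der: "(g has_real_derivative l) (at s within S)"
    and "g s \<in> {lo..hi}"
    and "g s = lo \<Longrightarrow> 0 < l" and "g s = hi \<Longrightarrow> l < 0"
  shows "\<exists>d>0. \<forall>h. 0 < h \<longrightarrow> h < d \<longrightarrow> s + h \<in> S \<longrightarrow> g (s + h) \<in> {lo..hi}"
proof -
  obtain d1 where "d1 > 0" and d1: "\<forall>h. 0 < h \<longrightarrow> h < d1 \<longrightarrow> s + h \<in> S \<longrightarrow> lo < g (s + h)"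
    using has_real_derivative_right_above[OF der] assms by auto
  obtain d2 where "d2 > 0" and d2: "\<forall>h. 0 < h \<longrightarrow> h < d2 \<longrightarrow> s + h \<in> S \<longrightarrow> - hi < - g (s + h)"
    using has_real_derivative_right_above[OF DERIV_minus[OF der], of "- hi"] assms by auto
  show ?thesis
    using \<open>d1 > 0\<close> \<open>d2 > 0\<close> d1 d2 by (intro exI[of _ "min d1 d2"]) auto
qed

lemma continuous_on_stays_in_closed:
  fixes x :: "real \<Rightarrow> 'a::topological_space"
  assumes cont: "continuous_on {0..T} x" and "closed K" and "x 0 \<in> K"
    and local: "\<And>s. s \<in> {0..T} \<Longrightarrow> x s \<in> K \<Longrightarrow>
                 \<exists>d>0. \<forall>h. 0 < h \<longrightarrow> h < d \<longrightarrow> s + h \<in> {0..T} \<longrightarrow> x (s + h) \<in> K"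
    and "t \<in> {0..T}"
  shows "x t \<in> K"
proof (rule ccontr)
  assume "x t \<notin> K"
  define B where "B = {u \<in> {0..T}. x u \<notin> K}"
  define s where "s = Inf B"
  have "t \<in> B" using \<open>t \<in> {0..T}\<close> \<open>x t \<notin> K\<close> by (simp add: B_def)
  have bdd: "bdd_below B" unfolding B_def by (rule bdd_belowI[of _ 0]) auto
  have "s \<le> t" unfolding s_def using cInf_lower[OF \<open>t \<in> B\<close> bdd] .
  have "0 \<le> s" unfolding s_def using \<open>t \<in> B\<close> by (intro cInf_greatest) (auto simp: B_def)
  with \<open>s \<le> t\<close> \<open>t \<in> {0..T}\<close> have "s \<in> {0..T}" by simp
  have before_s: "{0..<s} \<subseteq> {0..T} \<inter> x -` K"
  proof
    fix u assume "u \<in> {0..<s}"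
    then have "u \<notin> B" using cInf_lower[OF _ bdd] unfolding s_def by force
    then show "u \<in> {0..T} \<inter> x -` K"
      using \<open>u \<in> {0..<s}\<close> \<open>s \<in> {0..T}\<close> by (auto simp: B_def)
  qed
  have "x s \<in> K"
  proof (cases "s = 0")
    case True
    then show ?thesis using \<open>x 0 \<in> K\<close> by simp
  next
    case False
    have "closed ({0..T} \<inter> x -` K)"
      using continuous_closed_preimage[OF cont _ \<open>closed K\<close>] by simp
    then have "closure {0..<s} \<subseteq> {0..T} \<inter> x -` K"
      by (rule closure_minimal[OF before_s])
    then show ?thesis using False \<open>0 \<le> s\<close> by auto
  qed
  then obtain d where "d > 0"
    and d: "\<forall>h. 0 < h \<longrightarrow> h < d \<longrightarrow> s + h \<in> {0..T} \<longrightarrow> x (s + h) \<in> K"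
    using local[OF \<open>s \<in> {0..T}\<close>] by blast
  obtain b where "b \<in> B" "b < s + d"
    using cInf_less_iff[of B "s + d"] \<open>t \<in> B\<close> bdd \<open>d > 0\<close> unfolding s_def by auto
  moreover have "s < b"
  proof -
    have "s \<le> b" unfolding s_def using cInf_lower[OF \<open>b \<in> B\<close> bdd] .
    moreover have "b \<noteq> s" using \<open>b \<in> B\<close> \<open>x s \<in> K\<close> by (auto simp: B_def)
    ultimately show ?thesis by simp
  qed
  ultimately show False
    using d[rule_format, of "b - s"] by (auto simp: B_def)
qed

lemma forward_invariant_box:
  fixes F :: "real \<times> real \<Rightarrow> real \<times> real"
  assumes "\<And>m. m \<in> {a2..b2} \<Longrightarrow> 0 < fst (F (a1, m))"
    and "\<And>m. m \<in> {a2..b2} \<Longrightarrow> fst (F (b1, m)) < 0"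
    and "\<And>v. v \<in> {a1..b1} \<Longrightarrow> 0 < snd (F (v, a2))"
    and "\<And>v. v \<in> {a1..b1} \<Longrightarrow> snd (F (v, b2)) < 0"
  shows "forward_invariant F ({a1..b1} \<times> {a2..b2})"
  unfolding forward_invariant_def
proof (intro allI impI ballI)
  fix x :: "real \<Rightarrow> real \<times> real" and T t
  assume der: "\<forall>t\<in>{0..T}. (x has_vector_derivative F (x t)) (at t within {0..T})"
    and x0: "x 0 \<in> {a1..b1} \<times> {a2..b2}" and t: "t \<in> {0..T}"
  show "x t \<in> {a1..b1} \<times> {a2..b2}"
  proof (rule continuous_on_stays_in_closed[where x = x, OF _ _ x0 _ t])
    show "continuous_on {0..T} x"
      using der has_vector_derivative_continuous continuous_on_eq_continuous_within by blast
    show "closed ({a1..b1} \<times> {a2..b2})"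
      by (simp add: closed_Times)
  next
    fix s assume "s \<in> {0..T}" and xs: "x s \<in> {a1..b1} \<times> {a2..b2}"
    then have dx: "(x has_vector_derivative F (x s)) (at s within {0..T})"
      using der by blast
    obtain v m where vm: "x s = (v, m)" and "v \<in> {a1..b1}" "m \<in> {a2..b2}"
      using xs by (cases "x s") auto
    obtain d1 where "d1 > 0" and d1: "\<forall>h. 0 < h \<longrightarrow> h < d1 \<longrightarrow> s + h \<in> {0..T} \<longrightarrow>
        fst (x (s + h)) \<in> {a1..b1}"
      using has_real_derivative_right_in_interval[OF has_real_derivative_fst[OF dx], of a1 b1]
        vm \<open>v \<in> _\<close> assms(1,2)[OF \<open>m \<in> _\<close>] by auto
    obtain d2 where "d2 > 0" and d2: "\<forall>h. 0 < h \<longrightarrow> h < d2 \<longrightarrow> s + h \<in> {0..T} \<longrightarrow>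
        snd (x (s + h)) \<in> {a2..b2}"
      using has_real_derivative_right_in_interval[OF has_real_derivative_snd[OF dx], of a2 b2]
        vm \<open>m \<in> _\<close> assms(3,4)[OF \<open>v \<in> _\<close>] by auto
    show "\<exists>d>0. \<forall>h. 0 < h \<longrightarrow> h < d \<longrightarrow> s + h \<in> {0..T} \<longrightarrow> x (s + h) \<in> {a1..b1} \<times> {a2..b2}"
      using \<open>d1 > 0\<close> \<open>d2 > 0\<close> d1 d2 by (intro exI[of _ "min d1 d2"]) (auto simp: mem_Times_iff)
  qed
qed

definition v_nullcline :: "real \<Rightarrow> real \<Rightarrow> real \<Rightarrow> real \<Rightarrow> real" where
  "v_nullcline \<gamma> Vpm Vp v = root 3 (v^2 / ((1 - \<gamma>) * (Vp / Vpm)^2 + \<gamma> * v^2))"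

lemma root_3_less_iff: "root 3 q < m \<longleftrightarrow> q < m^3"
  by (metis odd_real_root_power_cancel odd_numeral real_root_less_iff zero_less_numeral)

lemma less_root_3_iff: "m < root 3 q \<longleftrightarrow> m^3 < q"
  by (metis odd_real_root_power_cancel odd_numeral real_root_less_iff zero_less_numeral)

lemma fst_vfield:
  "fst (vfield \<gamma> Vpm Vp c (v, m)) = m^3 * ((1 - \<gamma>) * (Vp / Vpm)^2 + \<gamma> * v^2) - v^2"
  by (simp add: vfield_def algebra_simps)

lemma snd_vfield: "snd (vfield \<gamma> Vpm Vp c (v, m)) = v - m * (v + c)"
  by (simp add: vfield_def algebra_simps)

lemma v_nullcline_denominator_pos:
  fixes \<gamma> Vpm Vp v :: real
  assumes "0 \<le> \<gamma>" "\<gamma> \<le> 1" "Vp \<noteq> 0" "Vpm \<noteq> 0" "v \<noteq> 0"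
  shows "0 < (1 - \<gamma>) * (Vp / Vpm)^2 + \<gamma> * v^2"
proof (cases "\<gamma> = 1")
  case True
  then show ?thesis using \<open>v \<noteq> 0\<close> by simp
next
  case False
  then have "0 < (1 - \<gamma>) * (Vp / Vpm)^2" using assms by simp
  moreover have "0 \<le> \<gamma> * v^2" using \<open>0 \<le> \<gamma>\<close> by simp
  ultimately show ?thesis by linarith
qed

lemma fst_vfield_pos_iff:
  assumes "0 < (1 - \<gamma>) * (Vp / Vpm)^2 + \<gamma> * v^2"
  shows "0 < fst (vfield \<gamma> Vpm Vp c (v, m)) \<longleftrightarrow> v_nullcline \<gamma> Vpm Vp v < m"
  using assms by (simp add: fst_vfield v_nullcline_def root_3_less_iff divide_less_eq mult.commute)

lemma fst_vfield_neg_iff: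
  assumes "0 < (1 - \<gamma>) * (Vp / Vpm)^2 + \<gamma> * v^2"
  shows "fst (vfield \<gamma> Vpm Vp c (v, m)) < 0 \<longleftrightarrow> m < v_nullcline \<gamma> Vpm Vp v"
  using assms by (simp add: fst_vfield v_nullcline_def less_root_3_iff less_divide_eq mult.commute)

lemma snd_vfield_pos_iff:
  assumes "0 < v + c"
  shows "0 < snd (vfield \<gamma> Vpm Vp c (v, m)) \<longleftrightarrow> m < v / (v + c)"
  using assms by (simp add: snd_vfield less_divide_eq)

lemma snd_vfield_neg_iff:
  assumes "0 < v + c"
  shows "snd (vfield \<gamma> Vpm Vp c (v, m)) < 0 \<longleftrightarrow> v / (v + c) < m"
  using assms by (simp add: snd_vfield divide_less_eq)

lemma divide_add_const_mono:
  fixes a v c :: real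
  assumes "0 \<le> c" "0 < a" "a \<le> v"
  shows "a / (a + c) \<le> v / (v + c)"
  using assms mult_right_mono[OF \<open>a \<le> v\<close> \<open>0 \<le> c\<close>] by (simp add: divide_simps algebra_simps)

theorem proposition3p7:
  fixes \<gamma> Vpm Vp c v1 v2 a1 a2 b1 b2 :: real
  assumes "0 \<le> \<gamma>" "\<gamma> \<le> 1" "0 < Vpm" "0 < Vp" "0 < c"
    and "0 < v1" "v1 < v2"
    and "pcub \<gamma> Vpm v1 Vp c = 0" "pcub \<gamma> Vpm v2 Vp c = 0"
    and "v1 < a1" "a1 < v2"
    and "root 3 (a1^2 / ((1 - \<gamma>) * (Vp / Vpm)^2 + \<gamma> * a1^2)) < a2"
    and "a2 < a1 / (a1 + c)"
    and "v2 < b1"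
    and "b1 / (b1 + c) < b2"
    and "b2 < root 3 (b1^2 / ((1 - \<gamma>) * (Vp / Vpm)^2 + \<gamma> * b1^2))"
  shows "forward_invariant (vfield \<gamma> Vpm Vp c) ({a1..b1} \<times> {a2..b2})"
proof -
  text \<open>The roots v1, v2 of pcub only guarantee that such a and b exist; the inequalities
    on a and b alone already make the field point strictly into the box.\<close>
  have "0 < a1" "a1 < b1" using assms(6,7,10,11,14) by linarith+
  note denominator_pos = v_nullcline_denominator_pos[OF assms(1,2)] assms(3,4)
  show ?thesis
  proof (rule forward_invariant_box)
    fix m assume "m \<in> {a2..b2}"
    then show "0 < fst (vfield \<gamma> Vpm Vp c (a1, m))" "fst (vfield \<gamma> Vpm Vp c (b1, m)) < 0"
      using fst_vfield_pos_iff fst_vfield_neg_iff denominator_pos \<open>0 < a1\<close> \<open>a1 < b1\<close> assms(12,16)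
      by (auto simp: v_nullcline_def)
  next
    fix v assume "v \<in> {a1..b1}"
    then have "a1 / (a1 + c) \<le> v / (v + c)" "v / (v + c) \<le> b1 / (b1 + c)" "0 < v + c"
      using divide_add_const_mono \<open>0 < a1\<close> \<open>0 < c\<close> by auto
    then show "0 < snd (vfield \<gamma> Vpm Vp c (v, a2))" "snd (vfield \<gamma> Vpm Vp c (v, b2)) < 0"
      using snd_vfield_pos_iff snd_vfield_neg_iff assms(13,15) by auto
  qed
qed

end
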